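(* Under the setting in the context (in particular $\hat\tau$ permutation-invariant), for every $j\in\mathcal U$ and $k\in\mathcal C$, $$\mathbb E\Big[\frac{\mathbf 1\{R_j>\mathcal Q_j,\ T_k\le\hat\tau,\ T_j\le\hat\tau\}}{\sum_{i\in\mathcal C\cup\{j\}}\mathbf 1\{T_i\le\hat\tau\}}\Big]=\mathbb E\Big[\frac{\mathbf 1\{R_k>\mathcal Q_j,\ T_k\le\hat\tau,\ T_j\le\hat\tau\}}{\sum_{i\in\mathcal C\cup\{j\}}\mathbf 1\{T_i\le\hat\tau\}}\Big],$$ where $\mathcal Q_j$ is the $\lceil(1-\alpha)(|\hat{\mathcal S}_c|+1)\rceil$-th smallest value of $\{R_i: i\in\hat{\mathcal S}_c\cup\{j\}\}$.
   Context: Setting: $\hat\mu,g:\mathbb R^d\to\mathbb R$ fixed deterministic measurable functions; calibration indices $\mathcal C$ ($|\mathcal C|=n$) and disjoint test indices $\mathcal U$ ($|\mathcal U|=m$); $(X_i,Y_i)$, $i\in\mathcal C\cup\mathcal U$, i.i.d.; $T_i=g(X_i)$, $R_i=|Y_i-\hat\mu(X_i)|$; $\alpha\in(0,1)$. The threshold is $\hat\tau=\tau(T_i:i\in\mathcal C\cup\mathcal U)$ for a deterministic measurable $\tau:\mathbb R^{n+m}\to\mathbb R$ invariant under permutations of its arguments, and $\hat{\mathcal S}_c=\{i\in\mathcal C:T_i\le\hat\tau\}$. The ratio inside the expectations is interpreted as $0$ when the indicator in the numerator is $0$. *)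

theory Defs
  imports "HOL-Probability.Probability" "HOL-Library.Multiset"
begin

definition kth_smallest :: "nat \<Rightarrow> real multiset \<Rightarrow> real" where
  "kth_smallest r A = sorted_list_of_multiset A ! (r - 1)"

definition sel_cal :: "nat set \<Rightarrow> (nat \<Rightarrow> real) \<Rightarrow> real \<Rightarrow> nat set" where
  "sel_cal C T thr = {i \<in> C. T i \<le> thr}"

definition conf_quantile :: "real \<Rightarrow> nat set \<Rightarrow> (nat \<Rightarrow> real) \<Rightarrow> nat \<Rightarrow> real" where
  "conf_quantile alpha S R j =
     kth_smallest (nat \<lceil>(1 - alpha) * (real (card S) + 1)\<rceil>) (image_mset R (mset_set (insert j S)))"

end

theory Submission
  imports Defs
begin

text \<open>Transposing the test point j with the calibration point k permutes the i.i.d. data,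
  so it preserves their joint law, and it leaves the permutation-invariant threshold unchanged.
  If j and k are both selected, the transposition also fixes the selected calibration set, the
  denominator and Q_j, which is a quantile of the residuals over a set containing both j and k;
  it only exchanges R_j and R_k. Otherwise both summands vanish. Measurability of the event
  R_a > Q_j comes from reading it as a count: at least ceil((1-alpha)(|S_c|+1)) residuals
  indexed by S_c \<union> {j} lie below R_a.\<close>

lemma sorted_nth_less_iff_length_filter:
  fixes xs :: "'a::linorder list"
  assumes "sorted xs" "i < length xs"
  shows "xs ! i < a \<longleftrightarrow> i < length (filter (\<lambda>x. x < a) xs)"
  using assms
proof (induction xs arbitrary: i)
  case Nil
  then show ?case by simp
next
  case (Cons y ys)
  show ?case
  proof (cases "y < a")
    case True
    with Cons show ?thesis by (cases i) auto
  next
    case False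
    with Cons.prems(1) have "filter (\<lambda>x. x < a) ys = []"
      by (auto simp: filter_empty_conv)
    moreover have "y \<le> (y # ys) ! i"
      using Cons.prems by (cases i) auto
    then have "\<not> (y # ys) ! i < a"
      using False by simp
    ultimately show ?thesis using False by simp
  qed
qed

lemma kth_smallest_less_iff:
  assumes "1 \<le> r" "r \<le> size A"
  shows "kth_smallest r A < a \<longleftrightarrow> r \<le> size (filter_mset (\<lambda>x. x < a) A)"
proof -
  let ?xs = "sorted_list_of_multiset A"
  have "length ?xs = size A" "size (filter_mset (\<lambda>x. x < a) A) = length (filter (\<lambda>x. x < a) ?xs)"
    by (metis mset_sorted_list_of_multiset size_mset, metis mset_filter mset_sorted_list_of_multiset size_mset)
  then show ?thesis
    using sorted_nth_less_iff_length_filter[of ?xs "r - 1" a] assms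
    by (auto simp: kth_smallest_def)
qed

lemma conf_quantile_less_iff:
  assumes "finite S" "j \<notin> S" "0 < alpha" "alpha < 1"
  shows "conf_quantile alpha S R j < a \<longleftrightarrow>
         nat \<lceil>(1 - alpha) * (real (card S) + 1)\<rceil> \<le> card {i \<in> insert j S. R i < a}"
proof -
  let ?r = "nat \<lceil>(1 - alpha) * (real (card S) + 1)\<rceil>"
  have "0 < (1 - alpha) * (real (card S) + 1)" "(1 - alpha) * (real (card S) + 1) \<le> real (card S) + 1"
    using assms by (simp_all add: mult_left_le_one_le)
  moreover have "card (insert j S) = card S + 1"
    using assms by simp
  ultimately have "1 \<le> ?r" "?r \<le> card (insert j S)"
    by linarith+
  moreover have "size (filter_mset (\<lambda>x. x < a) (image_mset R (mset_set (insert j S))))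
      = card {i \<in> insert j S. R i < a}"
    using assms by (simp only: filter_mset_image_mset size_image_mset finite_insert
        filter_mset_mset_set size_mset_set)
  ultimately show ?thesis
    unfolding conf_quantile_def by (subst kth_smallest_less_iff) auto
qed

lemma conf_quantile_reindex:
  assumes "bij_betw \<pi> (insert j S) (insert j S)" "\<And>i. i \<in> insert j S \<Longrightarrow> R' i = R (\<pi> i)"
  shows "conf_quantile alpha S R' j = conf_quantile alpha S R j"
proof -
  have "image_mset R' (mset_set (insert j S)) = image_mset (R \<circ> \<pi>) (mset_set (insert j S))"
    by (intro image_mset_cong) (metis assms(2) comp_apply count_mset_set(3) not_in_iff)
  also have "\<dots> = image_mset R (image_mset \<pi> (mset_set (insert j S)))"
    by (simp add: multiset.map_comp)
  also have "\<dots> = image_mset R (mset_set (insert j S))"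
    using assms(1) by (simp add: image_mset_mset_set bij_betw_def)
  finally show ?thesis by (simp add: conf_quantile_def)
qed

lemma (in prob_space) distr_iid_PiM:
  assumes indep: "indep_vars (\<lambda>_. N) Z I" and ident: "\<And>i. i \<in> I \<Longrightarrow> distr M N (Z i) = P"
    and "I \<noteq> {}"
  shows "distr M (PiM I (\<lambda>_. N)) (\<lambda>\<omega>. \<lambda>i\<in>I. Z i \<omega>) = PiM I (\<lambda>_. P)"
proof -
  have "random_variable N (Z i)" if "i \<in> I" for i
    using indep that unfolding indep_vars_def2 by auto
  then have "distr M (PiM I (\<lambda>_. N)) (\<lambda>\<omega>. \<lambda>i\<in>I. Z i \<omega>) = PiM I (\<lambda>i. distr M N (Z i))"
    using indep indep_vars_iff_distr_eq_PiM'[OF \<open>I \<noteq> {}\<close>, where M' = "\<lambda>_. N" and X = Z]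
    by simp
  also have "\<dots> = PiM I (\<lambda>_. P)"
    by (rule PiM_cong) (simp_all add: ident)
  finally show ?thesis .
qed

lemma (in prob_space) integral_iid_permute:
  fixes f :: "('i \<Rightarrow> 'b) \<Rightarrow> 'c::{banach, second_countable_topology}"
  assumes indep: "indep_vars (\<lambda>_. N) Z I"
    and ident: "\<And>i. i \<in> I \<Longrightarrow> distr M N (Z i) = P"
    and perm: "\<pi> permutes I"
    and f: "f \<in> borel_measurable (PiM I (\<lambda>_. N))"
  shows "(\<integral>\<omega>. f (\<lambda>i\<in>I. Z (\<pi> i) \<omega>) \<partial>M) = (\<integral>\<omega>. f (\<lambda>i\<in>I. Z i \<omega>) \<partial>M)"
proof (cases "I = {}")
  case True
  then show ?thesis by (simp add: restrict_def)
next
  case False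
  let ?V = "\<lambda>\<omega>. \<lambda>i\<in>I. Z i \<omega>" and ?reindex = "\<lambda>z. \<lambda>i\<in>I. z (\<pi> i)"
  have V_distr: "distr M (PiM I (\<lambda>_. N)) ?V = PiM I (\<lambda>_. P)"
    using distr_iid_PiM[OF indep ident False] .
  have rv: "random_variable N (Z i)" if "i \<in> I" for i
    using indep that unfolding indep_vars_def2 by auto
  then have V_meas: "?V \<in> measurable M (PiM I (\<lambda>_. N))"
    by (rule measurable_restrict)
  obtain i0 where "i0 \<in> I"
    using False by auto
  then have "prob_space P" "sets P = sets N"
    using ident[of i0] prob_space_distr[OF rv] by auto
  then have sets_eq: "sets (PiM I (\<lambda>_. P)) = sets (PiM I (\<lambda>_. N))"
    by (intro sets_PiM_cong) auto
  have reindex_meas: "?reindex \<in> measurable (PiM I (\<lambda>_. P)) (PiM I (\<lambda>_. P))"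
    using perm by (intro measurable_restrict measurable_component_singleton) (auto simp: permutes_in_image)
  have reindex_distr: "distr (PiM I (\<lambda>_. P)) (PiM I (\<lambda>_. P)) ?reindex = PiM I (\<lambda>_. P)"
    using distr_PiM_reindex[of I "\<lambda>_. P" \<pi> I] \<open>prob_space P\<close> permutes_inj_on[OF perm]
      permutes_in_image[OF perm] by auto
  have f_P: "f \<in> borel_measurable (PiM I (\<lambda>_. P))"
    using f by (simp add: measurable_cong_sets[OF sets_eq refl])
  have "(\<integral>\<omega>. f (\<lambda>i\<in>I. Z (\<pi> i) \<omega>) \<partial>M) = (\<integral>\<omega>. f (?reindex (?V \<omega>)) \<partial>M)"
    using permutes_in_image[OF perm] by (simp cong: restrict_cong)
  also have "\<dots> = (\<integral>z. f (?reindex z) \<partial>PiM I (\<lambda>_. P))"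
    using integral_distr[OF V_meas, of "f \<circ> ?reindex"] V_distr measurable_comp[OF reindex_meas f_P]
    by (simp add: comp_def measurable_cong_sets[OF sets_eq refl])
  also have "\<dots> = (\<integral>z. f z \<partial>PiM I (\<lambda>_. P))"
    using integral_distr[OF reindex_meas f_P] reindex_distr by simp
  also have "\<dots> = (\<integral>\<omega>. f (?V \<omega>) \<partial>M)"
    using integral_distr[OF V_meas f] V_distr by simp
  finally show ?thesis .
qed

text \<open>The summand of the theorem as a function of the data z i = (T_i, R_i); the index a
  selects the residual that is compared with Q_j.\<close>
definition miscoverage_term ::
  "real \<Rightarrow> nat set \<Rightarrow> nat set \<Rightarrow> ((nat \<Rightarrow> real) \<Rightarrow> real) \<Rightarrow> nat \<Rightarrow> nat \<Rightarrow> nat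
    \<Rightarrow> (nat \<Rightarrow> real \<times> real) \<Rightarrow> real" where
  "miscoverage_term alpha I C tau j k a z =
     (let T = (\<lambda>i. fst (z i)); R = (\<lambda>i. snd (z i)); th = tau (restrict T I)
      in if R a > conf_quantile alpha (sel_cal C T th) R j \<and> T k \<le> th \<and> T j \<le> th
         then 1 / real (card {i \<in> insert j C. T i \<le> th}) else 0)"

lemma miscoverage_term_cong:
  assumes "C \<subseteq> I" "j \<in> I" "k \<in> I" "a \<in> I" "\<And>i. i \<in> I \<Longrightarrow> z' i = z i"
  shows "miscoverage_term alpha I C tau j k a z' = miscoverage_term alpha I C tau j k a z"
proof -
  let ?T = "\<lambda>i. fst (z i)" and ?T' = "\<lambda>i. fst (z' i)"
  have "restrict ?T' I = restrict ?T I"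
    using assms(5) by (auto simp: restrict_def)
  moreover have "sel_cal C ?T' th = sel_cal C ?T th" for th
    using assms by (auto simp: sel_cal_def)
  moreover have "conf_quantile alpha S (\<lambda>i. snd (z' i)) j = conf_quantile alpha S (\<lambda>i. snd (z i)) j"
    if "S \<subseteq> C" for S
    using that assms by (intro conf_quantile_reindex[where \<pi> = id]) auto
  moreover have "{i \<in> insert j C. ?T' i \<le> th} = {i \<in> insert j C. ?T i \<le> th}" for th
    using assms by auto
  ultimately show ?thesis
    using assms by (simp add: miscoverage_term_def sel_cal_def Let_def)
qed

lemma miscoverage_term_swap:
  assumes "C \<subseteq> I" "j \<in> I" "j \<notin> C" "k \<in> C"
    and tau_inv: "\<forall>\<pi> t. \<pi> permutes I \<longrightarrow> tau (restrict (t \<circ> \<pi>) I) = tau (restrict t I)"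
  shows "miscoverage_term alpha I C tau j k j (z \<circ> Transposition.transpose j k)
       = miscoverage_term alpha I C tau j k k z"
proof -
  let ?\<sigma> = "Transposition.transpose j k"
  let ?T = "\<lambda>i. fst (z i)" and ?R = "\<lambda>i. snd (z i)"
  let ?th = "tau (restrict ?T I)"
  have "?\<sigma> permutes I"
    using assms by (intro permutes_swap_id) auto
  then have th_swap: "tau (restrict (\<lambda>i. fst (z (?\<sigma> i))) I) = ?th"
    using tau_inv[rule_format, of ?\<sigma> ?T] by (simp add: comp_def)
  show ?thesis
  proof (cases "?T k \<le> ?th \<and> ?T j \<le> ?th")
    case False
    then show ?thesis
      using th_swap by (auto simp: miscoverage_term_def Let_def)
  next
    case True
    let ?S = "sel_cal C ?T ?th"
    have sel_swap: "sel_cal C (\<lambda>i. fst (z (?\<sigma> i))) ?th = ?S"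
      using True assms(3) by (auto simp: sel_cal_def Transposition.transpose_def)
    have den_swap: "{i \<in> insert j C. fst (z (?\<sigma> i)) \<le> ?th} = {i \<in> insert j C. ?T i \<le> ?th}"
      using True by (auto simp: Transposition.transpose_def)
    have "k \<in> ?S"
      using True assms(4) by (simp add: sel_cal_def)
    then have "bij_betw ?\<sigma> (insert j ?S) (insert j ?S)"
      by (intro permutes_imp_bij permutes_swap_id) auto
    then have quantile_swap:
      "conf_quantile alpha ?S (\<lambda>i. snd (z (?\<sigma> i))) j = conf_quantile alpha ?S ?R j"
      by (rule conf_quantile_reindex) simp
    show ?thesis
      using True th_swap sel_swap den_swap quantile_swap
      by (simp add: miscoverage_term_def Let_def)
  qed
qed

lemma measurable_card_Collect:
  fixes P :: "nat \<Rightarrow> 'a \<Rightarrow> bool"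
  assumes "\<And>i. i \<in> A \<Longrightarrow> Measurable.pred N (P i)"
  shows "(\<lambda>x. card {i \<in> A. P i x}) \<in> measurable N (count_space UNIV)"
proof (rule measurable_card)
  fix i
  have "Measurable.pred N (\<lambda>x. i \<in> A \<and> P i x)"
    using assms by (intro pred_intros_conj1') auto
  then show "{x \<in> space N. i \<in> {i \<in> A. P i x}} \<in> sets N"
    by (simp only: pred_def mem_Collect_eq)
qed

lemma miscoverage_term_eq_count:
  assumes "finite C" "j \<notin> C" "0 < alpha" "alpha < 1"
  shows "miscoverage_term alpha I C tau j k a z =
    (let T = (\<lambda>i. fst (z i)); R = (\<lambda>i. snd (z i)); th = tau (restrict T I)
     in if nat \<lceil>(1 - alpha) * (real (card {i \<in> C. T i \<le> th}) + 1)\<rceil>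
             \<le> card {i \<in> insert j C. (i = j \<or> T i \<le> th) \<and> R i < R a}
           \<and> T k \<le> th \<and> T j \<le> th
        then 1 / real (card {i \<in> insert j C. T i \<le> th}) else 0)"
proof -
  let ?th = "tau (restrict (\<lambda>i. fst (z i)) I)"
  let ?S = "sel_cal C (\<lambda>i. fst (z i)) ?th"
  have "finite ?S" "j \<notin> ?S"
    using assms(1,2) by (simp_all add: sel_cal_def)
  moreover have "{i \<in> insert j ?S. snd (z i) < snd (z a)}
      = {i \<in> insert j C. (i = j \<or> fst (z i) \<le> ?th) \<and> snd (z i) < snd (z a)}"
    by (auto simp: sel_cal_def)
  ultimately show ?thesis
    using conf_quantile_less_iff[of ?S j alpha "\<lambda>i. snd (z i)"] assms(3,4)
    by (simp add: miscoverage_term_def Let_def sel_cal_def)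
qed

lemma measurable_miscoverage_term:
  assumes "finite C" "C \<subseteq> I" "j \<in> I" "j \<notin> C" "k \<in> I" "a \<in> I" "0 < alpha" "alpha < 1"
    and tau_meas[measurable]: "tau \<in> borel_measurable (PiM I (\<lambda>_. borel))"
  shows "miscoverage_term alpha I C tau j k a \<in> borel_measurable (PiM I (\<lambda>_. borel))"
proof -
  let ?N = "PiM I (\<lambda>_. borel :: (real \<times> real) measure)"
  let ?th = "\<lambda>z. tau (restrict (\<lambda>i. fst (z i)) I)"
  have "fst \<in> borel_measurable (borel :: (real \<times> real) measure)"
    "snd \<in> borel_measurable (borel :: (real \<times> real) measure)"
    by (simp_all only: borel_prod[symmetric] measurable_fst measurable_snd)
  then have fst_meas: "(\<lambda>z. fst (z i)) \<in> borel_measurable ?N"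
    and snd_meas: "(\<lambda>z. snd (z i)) \<in> borel_measurable ?N" if "i \<in> I" for i
    using that by (auto intro: measurable_compose[OF measurable_component_singleton])
  have th_meas: "?th \<in> borel_measurable ?N"
    using fst_meas by measurable
  have le_th: "Measurable.pred ?N (\<lambda>z. fst (z i) \<le> ?th z)" if "i \<in> I" for i
    unfolding pred_def by (rule borel_measurable_le[OF fst_meas[OF that] th_meas])
  have below: "Measurable.pred ?N (\<lambda>z. snd (z i) < snd (z a))" if "i \<in> I" for i
    unfolding pred_def by (rule borel_measurable_less[OF snd_meas[OF that] snd_meas[OF assms(6)]])
  have card_sel: "(\<lambda>z. card {i \<in> C. fst (z i) \<le> ?th z}) \<in> measurable ?N (count_space UNIV)"
    using assms(2) by (intro measurable_card_Collect le_th) auto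
  have card_den: "(\<lambda>z. card {i \<in> insert j C. fst (z i) \<le> ?th z}) \<in> measurable ?N (count_space UNIV)"
    using assms(2,3) by (intro measurable_card_Collect le_th) auto
  have "Measurable.pred ?N (\<lambda>z. (i = j \<or> fst (z i) \<le> ?th z) \<and> snd (z i) < snd (z a))"
    if "i \<in> I" for i
    by (rule pred_intros_logic(3)[OF pred_intros_disj1'[OF le_th[OF that]] below[OF that]])
  then have card_below: "(\<lambda>z. card {i \<in> insert j C. (i = j \<or> fst (z i) \<le> ?th z) \<and> snd (z i) < snd (z a)})
      \<in> measurable ?N (count_space UNIV)"
    using assms(2,3) by (intro measurable_card_Collect) blast
  have "Measurable.pred ?N (\<lambda>z :: nat \<Rightarrow> real \<times> real.
      nat \<lceil>(1 - alpha) * (real (card {i \<in> C. fst (z i) \<le> ?th z}) + 1)\<rceil>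
        \<le> card {i \<in> insert j C. (i = j \<or> fst (z i) \<le> ?th z) \<and> snd (z i) < snd (z a)})"
    by (rule measurable_compose_countable[OF _ card_sel]) (rule measurable_compose[OF card_below], simp)
  then have cond: "Measurable.pred ?N (\<lambda>z :: nat \<Rightarrow> real \<times> real.
      nat \<lceil>(1 - alpha) * (real (card {i \<in> C. fst (z i) \<le> ?th z}) + 1)\<rceil>
        \<le> card {i \<in> insert j C. (i = j \<or> fst (z i) \<le> ?th z) \<and> snd (z i) < snd (z a)}
      \<and> fst (z k) \<le> ?th z \<and> fst (z j) \<le> ?th z)" (is "Measurable.pred _ ?cond")
    by (intro pred_intros_logic(3) le_th assms(3,5))
  have "(\<lambda>z. 1 / real (card {i \<in> insert j C. fst (z i) \<le> ?th z})) \<in> borel_measurable ?N"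
    by (rule measurable_compose[OF card_den]) simp
  then have "(\<lambda>z. if ?cond z then 1 / real (card {i \<in> insert j C. fst (z i) \<le> ?th z}) else 0)
      \<in> borel_measurable ?N"
    by (rule measurable_If[OF _ measurable_const])
      (use cond in \<open>simp_all only: pred_def space_borel UNIV_I\<close>)
  moreover have "miscoverage_term alpha I C tau j k a
      = (\<lambda>z. if ?cond z then 1 / real (card {i \<in> insert j C. fst (z i) \<le> ?th z}) else 0)"
    by (rule ext) (simp only: miscoverage_term_eq_count[OF assms(1,4,7,8)] Let_def)
  ultimately show ?thesis
    by simp
qed

lemma (in prob_space) integral_miscoverage_term_transpose:
  fixes W :: "nat \<Rightarrow> 'a \<Rightarrow> real \<times> real"
  assumes indep: "indep_vars (\<lambda>_. borel) W I" and ident: "\<And>i. i \<in> I \<Longrightarrow> distr M borel (W i) = P"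
    and "finite C" "C \<subseteq> I" "j \<in> I" "j \<notin> C" "k \<in> C" "0 < alpha" "alpha < 1"
    and "tau \<in> borel_measurable (PiM I (\<lambda>_. borel))"
    and "\<forall>\<pi> t. \<pi> permutes I \<longrightarrow> tau (restrict (t \<circ> \<pi>) I) = tau (restrict t I)"
  shows "(\<integral>\<omega>. miscoverage_term alpha I C tau j k j (\<lambda>i. W i \<omega>) \<partial>M)
       = (\<integral>\<omega>. miscoverage_term alpha I C tau j k k (\<lambda>i. W i \<omega>) \<partial>M)"
proof -
  let ?F = "miscoverage_term alpha I C tau j k"
  let ?\<sigma> = "Transposition.transpose j k"
  have kI: "k \<in> I"
    using assms by auto
  have unrestrict: "?F a (\<lambda>i\<in>I. W i \<omega>) = ?F a (\<lambda>i. W i \<omega>)" if "a \<in> I" for a \<omega>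
    using assms kI that by (intro miscoverage_term_cong) auto
  have "?F j (\<lambda>i\<in>I. W (?\<sigma> i) \<omega>) = ?F j ((\<lambda>i. W i \<omega>) \<circ> ?\<sigma>)" for \<omega>
    using assms kI by (intro miscoverage_term_cong) auto
  also have "?F j ((\<lambda>i. W i \<omega>) \<circ> ?\<sigma>) = ?F k (\<lambda>i. W i \<omega>)" for \<omega>
    using assms by (intro miscoverage_term_swap) auto
  finally have "(\<integral>\<omega>. ?F k (\<lambda>i. W i \<omega>) \<partial>M) = (\<integral>\<omega>. ?F j (\<lambda>i\<in>I. W (?\<sigma> i) \<omega>) \<partial>M)"
    by simp
  also have "\<dots> = (\<integral>\<omega>. ?F j (\<lambda>i\<in>I. W i \<omega>) \<partial>M)"
    using assms by (intro integral_iid_permute[OF indep ident] permutes_swap_id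
        measurable_miscoverage_term) auto
  finally show ?thesis
    using unrestrict \<open>j \<in> I\<close> by simp
qed

theorem lemma8:
  fixes M :: "'a measure"
    and X :: "nat \<Rightarrow> 'a \<Rightarrow> real ^ 'd"
    and Y :: "nat \<Rightarrow> 'a \<Rightarrow> real"
    and mu g :: "real ^ 'd \<Rightarrow> real"
    and tau :: "(nat \<Rightarrow> real) \<Rightarrow> real"
    and P :: "((real ^ 'd) \<times> real) measure"
    and C U :: "nat set" and n m :: nat and alpha :: real
    and j k :: nat
  assumes "prob_space M"
    and "finite C" "finite U" "card C = n" "card U = m" "C \<inter> U = {}"
    and "prob_space.indep_vars M (\<lambda>_. borel) (\<lambda>i \<omega>. (X i \<omega>, Y i \<omega>)) (C \<union> U)"
    and "\<forall>i \<in> C \<union> U. distr M borel (\<lambda>\<omega>. (X i \<omega>, Y i \<omega>)) = P"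
    and "mu \<in> borel_measurable borel" "g \<in> borel_measurable borel"
    and "tau \<in> borel_measurable (PiM (C \<union> U) (\<lambda>_. borel))"
    and "\<forall>\<pi> t. \<pi> permutes (C \<union> U) \<longrightarrow>
           tau (restrict (t \<circ> \<pi>) (C \<union> U)) = tau (restrict t (C \<union> U))"
    and "0 < alpha" "alpha < 1"
    and "j \<in> U" "k \<in> C"
  shows
    "(let T = (\<lambda>i \<omega>. g (X i \<omega>));
          R = (\<lambda>i \<omega>. \<bar>Y i \<omega> - mu (X i \<omega>)\<bar>);
          th = (\<lambda>\<omega>. tau (restrict (\<lambda>i. T i \<omega>) (C \<union> U)));
          Q = (\<lambda>\<omega>. conf_quantile alpha (sel_cal C (\<lambda>i. T i \<omega>) (th \<omega>)) (\<lambda>i. R i \<omega>) j);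
          D = (\<lambda>\<omega>. real (card {i \<in> insert j C. T i \<omega> \<le> th \<omega>}))
      in (\<integral>\<omega>. (if R j \<omega> > Q \<omega> \<and> T k \<omega> \<le> th \<omega> \<and> T j \<omega> \<le> th \<omega> then 1 / D \<omega> else 0) \<partial>M)
       = (\<integral>\<omega>. (if R k \<omega> > Q \<omega> \<and> T k \<omega> \<le> th \<omega> \<and> T j \<omega> \<le> th \<omega> then 1 / D \<omega> else 0) \<partial>M))"
proof -
  interpret prob_space M by fact
  define I where "I = C \<union> U"
  define W where "W = (\<lambda>i \<omega>. (g (X i \<omega>), \<bar>Y i \<omega> - mu (X i \<omega>)\<bar>))"
  define h :: "(real ^ 'd) \<times> real \<Rightarrow> real \<times> real" where "h = (\<lambda>(x, y). (g x, \<bar>y - mu x\<bar>))"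
  have h_meas: "h \<in> borel_measurable borel"
    unfolding h_def using assms(9,10) by (simp add: borel_prod[symmetric]) measurable
  have W_h: "W i = h \<circ> (\<lambda>\<omega>. (X i \<omega>, Y i \<omega>))" for i
    by (auto simp: W_def h_def)
  have "indep_vars (\<lambda>_. borel) W I"
    unfolding W_h using indep_vars_compose[OF assms(7) h_meas] by (simp add: I_def)
  moreover have "distr M borel (W i) = distr P borel h" if "i \<in> I" for i
  proof -
    have "random_variable borel (\<lambda>\<omega>. (X i \<omega>, Y i \<omega>))"
      using assms(7) that unfolding indep_vars_def2 I_def by auto
    then show ?thesis
      using assms(8) that unfolding W_h I_def by (simp add: distr_distr[OF h_meas, symmetric])
  qed
  ultimately have "(\<integral>\<omega>. miscoverage_term alpha I C tau j k j (\<lambda>i. W i \<omega>) \<partial>M)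
      = (\<integral>\<omega>. miscoverage_term alpha I C tau j k k (\<lambda>i. W i \<omega>) \<partial>M)"
    using assms by (intro integral_miscoverage_term_transpose) (auto simp: I_def)
  then show ?thesis
    unfolding Let_def by (simp only: miscoverage_term_def Let_def W_def fst_conv snd_conv I_def)
qed

end
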